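(* Let $\mu_1$ and $\mu_2$ be Borel probability measures on $\mathbb{R}_+=[0,+\infty)$, neither of which is a point mass, and let $\mu=\mu_1\boxtimes\mu_2$. Set $k_j(z)=\eta_{\mu_j}(z)/z$, $j=1,2$. Then $|\varphi_t'(\omega_2(t))|<1$ for every $t<0$; equivalently, \[|t^2k_1'(\omega_1(t))k_2'(\omega_2(t))|<1,\quad t\in(-\infty,0).\]
   Context: For a Borel probability measure $\nu\neq\delta_0$ on $\mathbb{R}_+$, $\psi_\nu(z)=\int_{\mathbb{R}_+}\frac{zs\,d\nu(s)}{1-zs}$ and $\eta_\nu(z)=\psi_\nu(z)/(1+\psi_\nu(z))$ for $z\in\mathbb{C}\setminus\mathbb{R}_+$; ${\rm Eta}_{\mathbb{R}_+}$ is the set of all such $\eta_\nu$ (each maps $(-\infty,0)$ into $(-\infty,0)$). The free multiplicative convolution $\mu_1\boxtimes\mu_2$ is the distribution of $x_2^{1/2}x_1x_2^{1/2}$ for freely independent positive operators $x_1,x_2$ affiliated with a tracial $W^*$-probability space, with distributions $\mu_1,\mu_2$. The subordination functions $\omega_1,\omega_2$ are the unique functions in ${\rm Eta}_{\mathbb{R}_+}$ such that $\eta_\mu(z)=\eta_{\mu_1}(\omega_1(z))=\eta_{\mu_2}(\omega_2(z))=\omega_1(z)\omega_2(z)/z$ for $z$ in the upper half-plane $\mathbb{H}$. For $t<0$, $\varphi_t$ denotes the map $\varphi_t(z)=tk_1(tk_2(z))$ on $\mathbb{C}\setminus\mathbb{R}_+$, which fixes $\omega_2(t)$. *)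

theory Defs
  imports "HOL-Probability.Probability"
begin

definition prob_on_Rplus :: "real measure \<Rightarrow> bool" where
  "prob_on_Rplus \<nu> \<longleftrightarrow> prob_space \<nu> \<and> sets \<nu> = sets borel \<and> emeasure \<nu> {..<0} = 0"

definition is_point_mass :: "real measure \<Rightarrow> bool" where
  "is_point_mass \<nu> \<longleftrightarrow> (\<exists>a. \<nu> = return borel a)"

definition Cminus_Rplus :: "complex set" where
  "Cminus_Rplus = - (complex_of_real ` {0..})"

definition psi :: "real measure \<Rightarrow> complex \<Rightarrow> complex" where
  "psi \<nu> z = (\<integral> s. z * complex_of_real s / (1 - z * complex_of_real s) \<partial>\<nu>)"

definition eta :: "real measure \<Rightarrow> complex \<Rightarrow> complex" where
  "eta \<nu> z = psi \<nu> z / (1 + psi \<nu> z)"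

definition Eta_Rplus :: "(complex \<Rightarrow> complex) set" where
  "Eta_Rplus = {f. \<exists>\<nu>. prob_on_Rplus \<nu> \<and> \<nu> \<noteq> return borel 0 \<and>
                      (\<forall>z\<in>Cminus_Rplus. f z = eta \<nu> z)}"

text \<open>Subordination functions of mu1 boxtimes mu2: the (unique) pair in Eta_{R_+} with
  eta_{mu1}(omega1 z) = eta_{mu2}(omega2 z) = omega1 z * omega2 z / z on the upper half-plane.\<close>
definition subordination_pair ::
  "real measure \<Rightarrow> real measure \<Rightarrow> (complex \<Rightarrow> complex) \<Rightarrow> (complex \<Rightarrow> complex) \<Rightarrow> bool" where
  "subordination_pair \<mu>1 \<mu>2 \<omega>1 \<omega>2 \<longleftrightarrow>
     \<omega>1 \<in> Eta_Rplus \<and> \<omega>2 \<in> Eta_Rplus \<and>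
     (\<forall>z. Im z > 0 \<longrightarrow>
        eta \<mu>1 (\<omega>1 z) = \<omega>1 z * \<omega>2 z / z \<and>
        eta \<mu>2 (\<omega>2 z) = \<omega>1 z * \<omega>2 z / z)"

end

(*
  At a negative real point x everything is real. The weight a(s) = psi_weight x s lies in [0,1)
  on R_+, and with its moments A = E a, B = E a^2 one has psi(x) = -A and x psi'(x) = B - A.
  For k(z) = eta(z)/z this gives x k'(x) = d k(x) with d = (A^2 - B) / (A (1 - A)); Jensen's
  inequality A^2 <= B and a^2 < a off s = 0 (so B < A when nu is not delta_0) put d in (-1, 0].
  At t < 0 the subordination functions take negative real values w_1, w_2, and letting z tend
  to t through the upper half-plane turns the subordination identity into
  eta_mu_j(w_j) = w_1 w_2 / t. Hence t^2 k_1'(w_1) k_2'(w_2) = d_1 d_2, which by the chain rule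
  is also phi_t'(w_2), and |d_1 d_2| < 1.
*)

theory Submission
  imports Defs
begin

lemma prob_on_RplusD:
  assumes "prob_on_Rplus \<nu>"
  shows "prob_space \<nu>" "sets \<nu> = sets borel" "space \<nu> = UNIV" "AE s in \<nu>. 0 \<le> s"
proof -
  show \<nu>: "prob_space \<nu>" "sets \<nu> = sets borel" using assms by (auto simp: prob_on_Rplus_def)
  then show "space \<nu> = UNIV" by (metis sets_eq_imp_space_eq space_borel)
  show "AE s in \<nu>. 0 \<le> s"
    by (rule AE_I[of _ _ "{..<0}"]) (use assms \<nu> in \<open>auto simp: prob_on_Rplus_def\<close>)
qed

lemma integrable_bounded_on_Rplus:
  fixes f :: "real \<Rightarrow> 'b::{banach, second_countable_topology}"
  assumes "prob_on_Rplus \<nu>" "f \<in> borel_measurable borel" "\<And>s. 0 \<le> s \<Longrightarrow> norm (f s) \<le> B"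
  shows "integrable \<nu> f"
proof -
  note \<nu> = prob_on_RplusD[OF assms(1)]
  interpret prob_space \<nu> by (rule \<nu>(1))
  show ?thesis
  proof (rule integrable_const_bound)
    show "AE s in \<nu>. norm (f s) \<le> B" using \<nu>(4) by eventually_elim (rule assms(3))
    show "f \<in> borel_measurable \<nu>" using assms(2) \<nu>(2) measurable_cong_sets by blast
  qed
qed

lemma return_0_if_AE_eq_0:
  assumes "prob_on_Rplus \<nu>" "AE s in \<nu>. s = 0"
  shows "\<nu> = return borel 0"
proof (rule measure_eqI)
  note \<nu> = prob_on_RplusD[OF assms(1)]
  show "sets \<nu> = sets (return borel 0)" using \<nu>(2) by simp
  fix A assume A: "A \<in> sets \<nu>"
  have "emeasure \<nu> A = emeasure \<nu> (if 0 \<in> A then space \<nu> else {})"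
    by (rule emeasure_eq_AE) (use assms(2) A \<nu>(2,3) in \<open>auto elim: eventually_mono\<close>)
  also have "\<dots> = emeasure (return borel 0) A"
    using A \<nu>(2) prob_space.emeasure_space_1[OF \<nu>(1)] by simp
  finally show "emeasure \<nu> A = emeasure (return borel 0) A" .
qed

lemma integral_pos_on_Rplus:
  fixes g :: "real \<Rightarrow> real"
  assumes \<nu>: "prob_on_Rplus \<nu>" "\<nu> \<noteq> return borel 0" and g: "integrable \<nu> g"
    and nonneg: "\<And>s. 0 \<le> s \<Longrightarrow> 0 \<le> g s" and pos: "\<And>s. 0 < s \<Longrightarrow> 0 < g s"
  shows "0 < integral\<^sup>L \<nu> g"
proof -
  have AE_nonneg: "AE s in \<nu>. 0 \<le> s" by (rule prob_on_RplusD(4)[OF \<nu>(1)])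
  then have AE_g_nonneg: "AE s in \<nu>. 0 \<le> g s" by eventually_elim (rule nonneg)
  have "integral\<^sup>L \<nu> g \<noteq> 0"
  proof
    assume "integral\<^sup>L \<nu> g = 0"
    then have "AE s in \<nu>. g s = 0" using integral_nonneg_eq_0_iff_AE[OF g AE_g_nonneg] by simp
    with AE_nonneg have "AE s in \<nu>. s = 0"
      by eventually_elim (use pos in \<open>fastforce simp: le_less\<close>)
    with \<nu> show False using return_0_if_AE_eq_0 by blast
  qed
  moreover have "0 \<le> integral\<^sup>L \<nu> g" using AE_g_nonneg by (rule integral_nonneg_AE)
  ultimately show ?thesis by linarith
qed

definition psi_weight :: "real \<Rightarrow> real \<Rightarrow> real" where
  "psi_weight x s = - x * s / (1 - x * s)"

lemma psi_weight_measurable: "psi_weight x \<in> borel_measurable borel"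
  unfolding psi_weight_def by measurable

lemma psi_weight_bounds:
  assumes "x < 0" "0 \<le> s"
  shows "0 \<le> psi_weight x s" "psi_weight x s < 1" "0 < s \<Longrightarrow> 0 < psi_weight x s"
proof -
  have xs: "0 \<le> - x * s" using assms by (simp add: mult_nonpos_nonneg)
  then show "0 \<le> psi_weight x s" unfolding psi_weight_def by (intro divide_nonneg_pos) auto
  show "psi_weight x s < 1" unfolding psi_weight_def using xs by (subst pos_divide_less_eq) auto
  show "0 < s \<Longrightarrow> 0 < psi_weight x s"
    unfolding psi_weight_def using xs assms by (intro divide_pos_pos) (auto simp: mult_neg_pos)
qed

lemma integrable_psi_weight:
  assumes "prob_on_Rplus \<nu>" "x < 0"
  shows "integrable \<nu> (psi_weight x)" "integrable \<nu> (\<lambda>s. (psi_weight x s)\<^sup>2)"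
proof -
  have bound: "norm (psi_weight x s) \<le> 1" if "0 \<le> s" for s
    using psi_weight_bounds[OF assms(2) that] by simp
  show "integrable \<nu> (psi_weight x)"
    using assms(1) psi_weight_measurable bound by (rule integrable_bounded_on_Rplus)
  have "(\<lambda>s. (psi_weight x s)\<^sup>2) \<in> borel_measurable borel" using psi_weight_measurable by measurable
  then show "integrable \<nu> (\<lambda>s. (psi_weight x s)\<^sup>2)"
    by (rule integrable_bounded_on_Rplus[OF assms(1), where B=1])
       (use bound in \<open>auto simp: abs_square_le_1\<close>)
qed

lemma psi_of_real: "psi \<nu> (of_real x) = - of_real (\<integral>s. psi_weight x s \<partial>\<nu>)"
proof -
  have "psi \<nu> (of_real x) = (\<integral>s. of_real (- psi_weight x s) \<partial>\<nu>)"
    unfolding psi_def psi_weight_def by (intro Bochner_Integration.integral_cong) auto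
  then show ?thesis by simp
qed

lemma one_le_norm_one_minus:
  assumes "Re y \<le> 0" "0 \<le> s"
  shows "1 \<le> norm (1 - y * of_real s)"
proof -
  have "1 \<le> Re (1 - y * of_real s)" using assms by (simp add: mult_nonpos_nonneg)
  then show ?thesis using complex_Re_le_cmod order_trans by blast
qed

lemma norm_psi_integrand_le:
  assumes "Re y \<le> 0" "0 \<le> s"
  shows "norm (y * of_real s / (1 - y * of_real s)) \<le> 2"
proof -
  have n: "1 \<le> norm (1 - y * of_real s)" using one_le_norm_one_minus[OF assms] .
  then have "1 - y * of_real s \<noteq> 0" by auto
  then have "y * of_real s / (1 - y * of_real s) = 1 / (1 - y * of_real s) - 1"
    by (simp add: field_simps)
  also have "norm \<dots> \<le> norm (1 / (1 - y * of_real s)) + 1" by (rule norm_triangle_le_diff) simp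
  also have "norm (1 / (1 - y * of_real s)) \<le> 1" using n by (simp add: norm_divide divide_le_eq_1)
  finally show ?thesis by simp
qed

lemma psi_derivative_integrand_eq:
  fixes x s :: real
  assumes "x \<noteq> 0"
  shows "of_real s / (1 - of_real x * of_real s)\<^sup>2 = complex_of_real (((psi_weight x s)\<^sup>2 - psi_weight x s) / x)"
proof -
  have "s / (1 - x * s)\<^sup>2 = ((psi_weight x s)\<^sup>2 - psi_weight x s) / x"
  proof (cases "1 - x * s = 0")
    case False
    then show ?thesis using assms unfolding psi_weight_def by (simp add: divide_simps) algebra
  qed (simp add: psi_weight_def)
  then have "complex_of_real (s / (1 - x * s)\<^sup>2) = of_real (((psi_weight x s)\<^sup>2 - psi_weight x s) / x)"
    by (simp only:)
  then show ?thesis by simp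
qed

lemma psi_integrand_difference_quotient:
  fixes x s :: real and y :: complex
  assumes "x < 0" "0 \<le> s" "Re y \<le> 0" "y \<noteq> of_real x"
  shows "norm ((y * of_real s / (1 - y * of_real s)
                - of_real x * of_real s / (1 - of_real x * of_real s)) / (y - of_real x)
               - of_real s / (1 - of_real x * of_real s)\<^sup>2)
         \<le> norm (y - of_real x) / x\<^sup>2"
proof -
  define a X where "a = complex_of_real s" and "X = complex_of_real x"
  have ny: "1 \<le> norm (1 - y * a)" unfolding a_def using one_le_norm_one_minus assms by blast
  have xs: "1 \<le> 1 - x * s" using assms by (simp add: mult_nonpos_nonneg)
  have X: "1 - X * a = complex_of_real (1 - x * s)" unfolding X_def a_def by simp
  have "1 - X * a \<noteq> 0" unfolding X of_real_eq_0_iff using xs by linarith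
  moreover have "1 - y * a \<noteq> 0" "y - X \<noteq> 0" using ny assms(4) unfolding X_def by auto
  ultimately have "(y * a / (1 - y * a) - X * a / (1 - X * a)) / (y - X) - a / (1 - X * a)\<^sup>2
        = a\<^sup>2 * (y - X) / ((1 - y * a) * (1 - X * a)\<^sup>2)"
    by (simp add: divide_simps) algebra
  also have "norm \<dots> = (s / (1 - x * s))\<^sup>2 * norm (y - X) / norm (1 - y * a)"
  proof -
    have "norm (1 - X * a) = 1 - x * s" unfolding X norm_of_real using xs by linarith
    moreover have "norm a = s" unfolding a_def using assms(2) by simp
    ultimately show ?thesis by (simp add: norm_mult norm_divide norm_power power_divide)
  qed
  also have "\<dots> \<le> (s / (1 - x * s))\<^sup>2 * norm (y - X)"
    using divide_left_mono[OF ny, of "(s / (1 - x * s))\<^sup>2 * norm (y - X)"] ny by fastforce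
  also have "\<dots> \<le> (1 / x)\<^sup>2 * norm (y - X)"
  proof (rule mult_right_mono)
    have "s / (1 - x * s) \<le> - 1 / x"
      using xs assms by (simp add: divide_le_eq le_divide_eq algebra_simps)
    moreover have "0 \<le> s / (1 - x * s)" using xs assms by simp
    ultimately have "(s / (1 - x * s))\<^sup>2 \<le> (- 1 / x)\<^sup>2" by (rule power_mono)
    then show "(s / (1 - x * s))\<^sup>2 \<le> (1 / x)\<^sup>2" by simp
  qed simp
  finally show ?thesis unfolding a_def X_def by (simp add: power_one_over)
qed

lemma integral_psi_derivative_integrand:
  assumes "prob_on_Rplus \<nu>" "x < 0"
  shows "integrable \<nu> (\<lambda>s. of_real s / (1 - of_real x * of_real s)\<^sup>2 :: complex)"
    and "(\<integral>s. of_real s / (1 - of_real x * of_real s)\<^sup>2 \<partial>\<nu>)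
         = complex_of_real (((\<integral>s. (psi_weight x s)\<^sup>2 \<partial>\<nu>) - (\<integral>s. psi_weight x s \<partial>\<nu>)) / x)"
proof -
  have eq: "(\<lambda>s. of_real s / (1 - of_real x * of_real s)\<^sup>2)
            = (\<lambda>s. complex_of_real (((psi_weight x s)\<^sup>2 - psi_weight x s) / x))"
    using assms(2) by (intro ext psi_derivative_integrand_eq) simp
  note weight_integrable = integrable_psi_weight[OF assms]
  show "integrable \<nu> (\<lambda>s. of_real s / (1 - of_real x * of_real s)\<^sup>2 :: complex)"
    unfolding eq by (intro integrable_of_real integrable_divide_zero Bochner_Integration.integrable_diff weight_integrable)
  show "(\<integral>s. of_real s / (1 - of_real x * of_real s)\<^sup>2 \<partial>\<nu>)
         = complex_of_real (((\<integral>s. (psi_weight x s)\<^sup>2 \<partial>\<nu>) - (\<integral>s. psi_weight x s \<partial>\<nu>)) / x)"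
    unfolding eq integral_complex_of_real using weight_integrable by simp
qed

lemma psi_has_field_derivative_neg:
  assumes \<nu>: "prob_on_Rplus \<nu>" and x: "x < 0"
  shows "(psi \<nu> has_field_derivative
           of_real (((\<integral>s. (psi_weight x s)\<^sup>2 \<partial>\<nu>) - (\<integral>s. psi_weight x s \<partial>\<nu>)) / x)) (at (of_real x))"
proof -
  interpret prob_space \<nu> by (rule prob_on_RplusD(1)[OF \<nu>])
  define X where "X = complex_of_real x"
  define g :: "complex \<Rightarrow> real \<Rightarrow> complex" where "g y s = y * of_real s / (1 - y * of_real s)" for y s
  define q where "q s = of_real s / (1 - X * of_real s)\<^sup>2" for s
  have psi_g: "psi \<nu> y = integral\<^sup>L \<nu> (g y)" for y unfolding psi_def g_def ..
  have g: "integrable \<nu> (g y)" if "Re y \<le> 0" for y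
  proof -
    have "g y \<in> borel_measurable borel" unfolding g_def by measurable
    then show ?thesis
      by (rule integrable_bounded_on_Rplus[OF \<nu>]) (unfold g_def, rule norm_psi_integrand_le[OF that])
  qed
  note q = integral_psi_derivative_integrand[OF \<nu> x, folded X_def, folded q_def]
  have quotient_bound: "norm ((psi \<nu> y - psi \<nu> X) / (y - X) - integral\<^sup>L \<nu> q) \<le> norm (y - X) / x\<^sup>2"
    if y: "Re y \<le> 0" "y \<noteq> X" for y
  proof -
    have gX: "integrable \<nu> (g X)" using g x unfolding X_def by simp
    have "(psi \<nu> y - psi \<nu> X) / (y - X) - integral\<^sup>L \<nu> q
          = (\<integral>s. (g y s - g X s) / (y - X) - q s \<partial>\<nu>)"
      using g[OF y(1)] gX q(1) unfolding psi_g by simp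
    also have "norm \<dots> \<le> (\<integral>s. norm ((g y s - g X s) / (y - X) - q s) \<partial>\<nu>)"
      by (rule integral_norm_bound)
    also have "\<dots> \<le> (\<integral>s. norm (y - X) / x\<^sup>2 \<partial>\<nu>)"
    proof (rule integral_mono_AE)
      show "integrable \<nu> (\<lambda>s. norm ((g y s - g X s) / (y - X) - q s))"
        using g[OF y(1)] gX q(1) by auto
      show "AE s in \<nu>. norm ((g y s - g X s) / (y - X) - q s) \<le> norm (y - X) / x\<^sup>2"
        using prob_on_RplusD(4)[OF \<nu>] by eventually_elim
          (unfold g_def q_def X_def, rule psi_integrand_difference_quotient[OF x _ y[unfolded X_def]])
    qed simp
    also have "\<dots> = norm (y - X) / x\<^sup>2" by (simp add: prob_space)
    finally show ?thesis .
  qed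
  have "\<forall>\<^sub>F y in at X. y \<in> {z. Re z < 0} - {X}"
    by (rule eventually_at_in_open[OF open_halfspace_Re_lt]) (use x in \<open>simp add: X_def\<close>)
  then have "\<forall>\<^sub>F y in at X. norm ((psi \<nu> y - psi \<nu> X) / (y - X) - integral\<^sup>L \<nu> q) \<le> norm (y - X) / x\<^sup>2"
    by eventually_elim (simp add: quotient_bound)
  moreover have "((\<lambda>y. norm (y - X) / x\<^sup>2) \<longlongrightarrow> 0) (at X)"
    by (intro tendsto_divide_zero tendsto_norm_zero LIM_zero tendsto_ident_at)
  ultimately have "((\<lambda>y. (psi \<nu> y - psi \<nu> X) / (y - X) - integral\<^sup>L \<nu> q) \<longlongrightarrow> 0) (at X)"
    by (rule Lim_null_comparison)
  then show ?thesis
    unfolding has_field_derivative_iff X_def[symmetric] q(2)[symmetric] by (simp add: Lim_null[symmetric])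
qed

lemma psi_weight_moments:
  assumes "prob_on_Rplus \<nu>" "\<nu> \<noteq> return borel 0" "x < 0"
  defines "A \<equiv> \<integral>s. psi_weight x s \<partial>\<nu>" and "B \<equiv> \<integral>s. (psi_weight x s)\<^sup>2 \<partial>\<nu>"
  shows "0 < A" "A < 1" "A\<^sup>2 \<le> B" "B < A"
proof -
  interpret prob_space \<nu> by (rule prob_on_RplusD(1)[OF assms(1)])
  note weight_integrable = integrable_psi_weight[OF assms(1,3)]
  note bounds = psi_weight_bounds[OF assms(3)]
  show "0 < A" unfolding A_def
    by (rule integral_pos_on_Rplus[OF assms(1,2) weight_integrable(1)]) (use bounds in auto)
  have "0 < (\<integral>s. 1 - psi_weight x s \<partial>\<nu>)"
    by (rule integral_pos_on_Rplus[OF assms(1,2)]) (use weight_integrable bounds in \<open>fastforce+\<close>)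
  then show "A < 1" unfolding A_def using weight_integrable by (simp add: prob_space)
  show "A\<^sup>2 \<le> B" using variance_eq[OF weight_integrable] variance_positive[of "psi_weight x"] unfolding A_def B_def by simp
  have "0 < (\<integral>s. psi_weight x s - (psi_weight x s)\<^sup>2 \<partial>\<nu>)"
  proof (rule integral_pos_on_Rplus[OF assms(1,2)])
    show "integrable \<nu> (\<lambda>s. psi_weight x s - (psi_weight x s)\<^sup>2)" using weight_integrable by simp
    show "0 \<le> psi_weight x s - (psi_weight x s)\<^sup>2" if "0 \<le> s" for s
      using bounds[OF that] by (simp add: power2_eq_square mult_left_le)
    show "0 < psi_weight x s - (psi_weight x s)\<^sup>2" if "0 < s" for s
      using bounds[of s] that by (simp add: power2_eq_square mult_less_cancel_left1)
  qed
  then show "B < A" unfolding A_def B_def using weight_integrable by simp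
qed

lemma eta_has_field_derivative_neg:
  assumes "prob_on_Rplus \<nu>" "\<nu> \<noteq> return borel 0" "x < 0"
  defines "A \<equiv> \<integral>s. psi_weight x s \<partial>\<nu>" and "B \<equiv> \<integral>s. (psi_weight x s)\<^sup>2 \<partial>\<nu>"
  shows "eta \<nu> (of_real x) = of_real (- A / (1 - A))"
    and "(eta \<nu> has_field_derivative of_real ((B - A) / (x * (1 - A)\<^sup>2))) (at (of_real x))"
proof -
  have psi: "psi \<nu> (of_real x) = - of_real A" unfolding A_def by (rule psi_of_real)
  have A: "A < 1" unfolding A_def by (rule psi_weight_moments[OF assms(1-3)])
  then show "eta \<nu> (of_real x) = of_real (- A / (1 - A))" unfolding eta_def psi by simp
  have dpsi: "(psi \<nu> has_field_derivative of_real ((B - A) / x)) (at (of_real x))"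
    unfolding A_def B_def by (rule psi_has_field_derivative_neg[OF assms(1,3)])
  have dpsi1: "((\<lambda>z. 1 + psi \<nu> z) has_field_derivative of_real ((B - A) / x)) (at (of_real x))"
    using DERIV_add[OF DERIV_const dpsi] by simp
  have psi1: "1 + psi \<nu> (of_real x) = of_real (1 - A)" unfolding psi by simp
  have deriv: "(eta \<nu> has_field_derivative
          of_real (((B - A) / x * (1 - A) + A * ((B - A) / x)) / ((1 - A) * (1 - A)))) (at (of_real x))"
    using DERIV_divide[OF dpsi dpsi1, unfolded psi1 psi] A unfolding eta_def[abs_def] by simp
  have "(B - A) / x * (1 - A) + A * ((B - A) / x) = (B - A) / x" by algebra
  then have "((B - A) / x * (1 - A) + A * ((B - A) / x)) / ((1 - A) * (1 - A))
             = (B - A) / (x * (1 - A)\<^sup>2)"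
    by (simp add: power2_eq_square)
  with deriv show "(eta \<nu> has_field_derivative of_real ((B - A) / (x * (1 - A)\<^sup>2))) (at (of_real x))"
    by (simp only:)
qed

lemma eta_of_real_neg:
  assumes "prob_on_Rplus \<nu>" "\<nu> \<noteq> return borel 0" "x < 0"
  obtains e where "eta \<nu> (of_real x) = of_real e" "e < 0" "isCont (eta \<nu>) (of_real x)"
proof
  define A where "A = (\<integral>s. psi_weight x s \<partial>\<nu>)"
  note eta = eta_has_field_derivative_neg[OF assms, folded A_def]
  show "eta \<nu> (of_real x) = of_real (- A / (1 - A))" by (rule eta(1))
  show "- A / (1 - A) < 0" using psi_weight_moments(1,2)[OF assms, folded A_def] by simp
  show "isCont (eta \<nu>) (of_real x)" by (rule DERIV_isCont[OF eta(2)])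
qed

(* With k(z) = eta(z)/z, the derivative below says x k'(x) = d k(x). *)
lemma eta_over_z_has_field_derivative_neg:
  assumes "prob_on_Rplus \<nu>" "\<nu> \<noteq> return borel 0" "x < 0" "eta \<nu> (of_real x) = of_real e"
  obtains d where "-1 < d" "d \<le> 0"
    and "((\<lambda>z. eta \<nu> z / z) has_field_derivative of_real (e * d / x\<^sup>2)) (at (of_real x))"
proof
  define A B where "A = (\<integral>s. psi_weight x s \<partial>\<nu>)" and "B = (\<integral>s. (psi_weight x s)\<^sup>2 \<partial>\<nu>)"
  note moments = psi_weight_moments[OF assms(1-3), folded A_def B_def]
  note eta = eta_has_field_derivative_neg[OF assms(1-3), folded A_def B_def]
  have e_eq: "e = - A / (1 - A)" using eta(1) assms(4) of_real_eq_iff by metis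
  define d where "d = (A\<^sup>2 - B) / (A * (1 - A))"
  have "0 < A * (1 - A)" using moments(1,2) by simp
  then show "-1 < d" "d \<le> 0" unfolding d_def using moments(3,4)
    by (simp_all add: less_divide_eq divide_nonpos_pos algebra_simps power2_eq_square)
  have "((\<lambda>z. eta \<nu> z / z) has_field_derivative
          of_real (((B - A) / (x * (1 - A)\<^sup>2) * x - e * 1) / (x * x))) (at (of_real x))"
    using DERIV_divide[OF eta(2) DERIV_ident] assms(3,4) by simp
  moreover have "((B - A) / (x * (1 - A)\<^sup>2) * x - e * 1) / (x * x) = e * d / x\<^sup>2"
  proof -
    have "A \<noteq> 0" "1 - A \<noteq> 0" "x \<noteq> 0" using moments(1,2) assms(3) by auto
    then show ?thesis unfolding e_eq d_def by (simp add: divide_simps) algebra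
  qed
  ultimately show "((\<lambda>z. eta \<nu> z / z) has_field_derivative of_real (e * d / x\<^sup>2)) (at (of_real x))"
    by (simp only:)
qed

lemma eq_on_real_line_if_eq_on_upper_half_plane:
  fixes f g :: "complex \<Rightarrow> 'a::t2_space"
  assumes "isCont f (of_real x)" "isCont g (of_real x)" "\<And>z. 0 < Im z \<Longrightarrow> f z = g z"
  shows "f (of_real x) = g (of_real x)"
proof -
  define z where "z n = of_real x + \<i> * of_real (inverse (real (Suc n)))" for n
  have "z \<longlonglongrightarrow> of_real x + \<i> * of_real 0"
    unfolding z_def by (intro tendsto_intros LIMSEQ_inverse_real_of_nat)
  then have z: "z \<longlonglongrightarrow> of_real x" by simp
  have "(\<lambda>n. f (z n)) \<longlonglongrightarrow> f (of_real x)" by (rule isCont_tendsto_compose[OF assms(1) z])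
  moreover have "(\<lambda>n. f (z n)) \<longlonglongrightarrow> g (of_real x)"
    using isCont_tendsto_compose[OF assms(2) z] assms(3) by (simp add: z_def)
  ultimately show ?thesis by (rule LIMSEQ_unique)
qed

(* Each omega_j agrees off R_+ with some eta_nu_j, which is continuous at t; this lets the
  subordination identity pass from the upper half-plane to t. *)
lemma subordination_pair_at_neg:
  assumes sub: "subordination_pair \<mu>1 \<mu>2 \<omega>1 \<omega>2"
    and \<mu>: "prob_on_Rplus \<mu>1" "prob_on_Rplus \<mu>2" "\<mu>1 \<noteq> return borel 0" "\<mu>2 \<noteq> return borel 0"
    and t: "t < 0"
  obtains e1 e2 where "e1 < 0" "e2 < 0" "\<omega>1 (of_real t) = of_real e1" "\<omega>2 (of_real t) = of_real e2"
    and "eta \<mu>1 (of_real e1) = of_real (e1 * e2 / t)" "eta \<mu>2 (of_real e2) = of_real (e1 * e2 / t)"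
proof -
  obtain \<nu>1 \<nu>2 where \<nu>: "prob_on_Rplus \<nu>1" "\<nu>1 \<noteq> return borel 0" "prob_on_Rplus \<nu>2" "\<nu>2 \<noteq> return borel 0"
    and \<omega>: "\<And>z. z \<in> Cminus_Rplus \<Longrightarrow> \<omega>1 z = eta \<nu>1 z" "\<And>z. z \<in> Cminus_Rplus \<Longrightarrow> \<omega>2 z = eta \<nu>2 z"
    using sub unfolding subordination_pair_def Eta_Rplus_def by blast
  have upper: "z \<in> Cminus_Rplus" if "0 < Im z" for z using that unfolding Cminus_Rplus_def by auto
  have "of_real t \<in> Cminus_Rplus" using t unfolding Cminus_Rplus_def by auto
  obtain e1 where e1: "eta \<nu>1 (of_real t) = of_real e1" "e1 < 0" "isCont (eta \<nu>1) (of_real t)"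
    using eta_of_real_neg[OF \<nu>(1,2) t] by metis
  obtain e2 where e2: "eta \<nu>2 (of_real t) = of_real e2" "e2 < 0" "isCont (eta \<nu>2) (of_real t)"
    using eta_of_real_neg[OF \<nu>(3,4) t] by metis
  have boundary: "eta \<mu> (of_real e) = of_real (e1 * e2 / t)"
    if "prob_on_Rplus \<mu>" "\<mu> \<noteq> return borel 0" "eta \<nu> (of_real t) = of_real e" "e < 0"
      "isCont (eta \<nu>) (of_real t)"
      "\<And>z. 0 < Im z \<Longrightarrow> eta \<mu> (eta \<nu> z) = eta \<nu>1 z * eta \<nu>2 z / z" for \<mu> \<nu> e
  proof -
    have "isCont (eta \<mu>) (eta \<nu> (of_real t))"
      using eta_of_real_neg[OF that(1,2,4)] that(3) by metis
    then have "eta \<mu> (eta \<nu> (of_real t)) = eta \<nu>1 (of_real t) * eta \<nu>2 (of_real t) / of_real t"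
      using that(5,6) e1(3) e2(3) t
      by (intro eq_on_real_line_if_eq_on_upper_half_plane[where f="\<lambda>z. eta \<mu> (eta \<nu> z)"])
         (auto intro!: continuous_intros isCont_o2[where g="eta \<mu>"])
    then show ?thesis using that(3) e1(1) e2(1) by simp
  qed
  have "\<And>z. 0 < Im z \<Longrightarrow> eta \<mu>1 (eta \<nu>1 z) = eta \<nu>1 z * eta \<nu>2 z / z"
       "\<And>z. 0 < Im z \<Longrightarrow> eta \<mu>2 (eta \<nu>2 z) = eta \<nu>1 z * eta \<nu>2 z / z"
    using sub upper \<omega> unfolding subordination_pair_def by auto
  then show thesis
    using that e1 e2 \<omega> \<open>of_real t \<in> Cminus_Rplus\<close> boundary[OF \<mu>(1,3) e1(1,2,3)] boundary[OF \<mu>(2,4) e2(1,2,3)]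
    by auto
qed

lemma abs_mult_less_1:
  fixes a b :: real
  assumes "-1 < a" "a \<le> 0" "-1 < b" "b \<le> 0"
  shows "\<bar>a * b\<bar> < 1"
proof -
  have "\<bar>a * b\<bar> = \<bar>a\<bar> * \<bar>b\<bar>" by (rule abs_mult)
  also have "\<dots> \<le> \<bar>a\<bar>" using assms by (intro mult_left_le) auto
  also have "\<dots> < 1" using assms by simp
  finally show ?thesis .
qed

theorem corollary5p3:
  fixes \<mu>1 \<mu>2 :: "real measure" and \<omega>1 \<omega>2 :: "complex \<Rightarrow> complex" and t :: real
  assumes "prob_on_Rplus \<mu>1" and "prob_on_Rplus \<mu>2"
    and "\<not> is_point_mass \<mu>1" and "\<not> is_point_mass \<mu>2"
    and "subordination_pair \<mu>1 \<mu>2 \<omega>1 \<omega>2"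
    and "t < 0"
  shows "norm (deriv (\<lambda>z. complex_of_real t * (eta \<mu>1 (complex_of_real t * (eta \<mu>2 z / z))
                             / (complex_of_real t * (eta \<mu>2 z / z))))
                (\<omega>2 (complex_of_real t))) < 1
       \<and> norm ((complex_of_real t)\<^sup>2 * deriv (\<lambda>z. eta \<mu>1 z / z) (\<omega>1 (complex_of_real t))
                * deriv (\<lambda>z. eta \<mu>2 z / z) (\<omega>2 (complex_of_real t))) < 1"
proof -
  have \<mu>: "\<mu>1 \<noteq> return borel 0" "\<mu>2 \<noteq> return borel 0"
    using assms(3,4) unfolding is_point_mass_def by auto
  obtain e1 e2 where e: "e1 < 0" "e2 < 0"
    and \<omega>: "\<omega>1 (of_real t) = of_real e1" "\<omega>2 (of_real t) = of_real e2"
    and f: "eta \<mu>1 (of_real e1) = of_real (e1 * e2 / t)" "eta \<mu>2 (of_real e2) = of_real (e1 * e2 / t)"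
    using subordination_pair_at_neg[OF assms(5,1,2) \<mu> assms(6)] by blast
  obtain d1 where d1: "-1 < d1" "d1 \<le> 0"
    and k1: "((\<lambda>z. eta \<mu>1 z / z) has_field_derivative of_real (e1 * e2 / t * d1 / e1\<^sup>2)) (at (of_real e1))"
    by (rule eta_over_z_has_field_derivative_neg[OF assms(1) \<mu>(1) e(1) f(1)])
  obtain d2 where d2: "-1 < d2" "d2 \<le> 0"
    and k2: "((\<lambda>z. eta \<mu>2 z / z) has_field_derivative of_real (e1 * e2 / t * d2 / e2\<^sup>2)) (at (of_real e2))"
    by (rule eta_over_z_has_field_derivative_neg[OF assms(2) \<mu>(2) e(2) f(2)])
  define T where "T = complex_of_real t"
  have k2_at_e2: "T * (eta \<mu>2 (of_real e2) / of_real e2) = of_real e1"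
    using e assms(6) unfolding T_def f(2) by (simp add: field_simps)
  from DERIV_cmult[OF DERIV_chain2[OF k1[folded k2_at_e2] DERIV_cmult[OF k2]], of T]
  have "((\<lambda>z. T * (eta \<mu>1 (T * (eta \<mu>2 z / z)) / (T * (eta \<mu>2 z / z)))) has_field_derivative
          T * (of_real (e1 * e2 / t * d1 / e1\<^sup>2) * (T * of_real (e1 * e2 / t * d2 / e2\<^sup>2)))) (at (of_real e2))" .
  moreover have "t * ((e1 * e2 / t * d1 / e1\<^sup>2) * (t * (e1 * e2 / t * d2 / e2\<^sup>2))) = d1 * d2"
    using e assms(6) by (simp add: field_simps power2_eq_square)
  ultimately have "deriv (\<lambda>z. T * (eta \<mu>1 (T * (eta \<mu>2 z / z)) / (T * (eta \<mu>2 z / z)))) (\<omega>2 T)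
      = of_real (d1 * d2)"
    and "T\<^sup>2 * deriv (\<lambda>z. eta \<mu>1 z / z) (\<omega>1 T) * deriv (\<lambda>z. eta \<mu>2 z / z) (\<omega>2 T) = of_real (d1 * d2)"
    using DERIV_imp_deriv[OF k1] DERIV_imp_deriv[OF k2] \<omega> unfolding T_def
    by (auto simp: DERIV_imp_deriv power2_eq_square mult_ac)
  then show ?thesis unfolding T_def using abs_mult_less_1[OF d1 d2] by (simp only: norm_of_real simp_thms)
qed

end
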